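(* Let $\{(\mathbf{x}_i,t_i,\delta_i)\}_{i=1}^n$ be a dataset with $\mathbf{x}_i\in\mathbb{R}^p$, $t_i\in\mathbb{R}$, $\delta_i\in\{0,1\}$, let $\mathbf{X}$ have rows $\mathbf{x}_i^T$ (entries $X_{kl}$), $R_i=\{j:t_j\ge t_i\}$, and $$\ell(\boldsymbol\beta)=\sum_{i=1}^n\delta_i\Big[\log\Big(\sum_{j\in R_i}e^{\mathbf{x}_j^T\boldsymbol\beta}\Big)-\mathbf{x}_i^T\boldsymbol\beta\Big].$$ Then for every $\boldsymbol\beta\in\mathbb{R}^p$ and every $l\in\{1,\dots,p\}$, $$0\le\frac{\partial^2\ell(\boldsymbol\beta)}{\partial\beta_l^2}\le\frac14\sum_{i=1}^n\delta_i\Big(\max_{k\in R_i}X_{kl}-\min_{k\in R_i}X_{kl}\Big)^2$$ and $$\Big|\frac{\partial^3\ell(\boldsymbol\beta)}{\partial\beta_l^3}\Big|\le\frac{1}{6\sqrt3}\sum_{i=1}^n\delta_i\Big|\max_{k\in R_i}X_{kl}-\min_{k\in R_i}X_{kl}\Big|^3.$$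
   Context: $\ell$ is the Cox negative log partial likelihood. Consequently the first and second order partial derivatives in each coordinate are Lipschitz with these constants (this is the paper's interpretation, not part of the claim). *)

theory Defs
  imports "HOL-Analysis.Analysis"
begin

text \<open>Data: n observations, p covariates, indexed from 0.
  X i k is the k-th covariate of observation i (i < n, k < p);
  t i the observed time, d i the event indicator (in {0,1}).\<close>

definition risk_set :: "nat \<Rightarrow> (nat \<Rightarrow> real) \<Rightarrow> nat \<Rightarrow> nat set" where
  "risk_set n t i = {j \<in> {..<n}. t j \<ge> t i}"

definition lin_pred :: "nat \<Rightarrow> (nat \<Rightarrow> nat \<Rightarrow> real) \<Rightarrow> nat \<Rightarrow> (nat \<Rightarrow> real) \<Rightarrow> real" where
  "lin_pred p X i \<beta> = (\<Sum>k<p. X i k * \<beta> k)"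

definition cox_loss ::
  "nat \<Rightarrow> nat \<Rightarrow> (nat \<Rightarrow> nat \<Rightarrow> real) \<Rightarrow> (nat \<Rightarrow> real) \<Rightarrow> (nat \<Rightarrow> real) \<Rightarrow> (nat \<Rightarrow> real) \<Rightarrow> real" where
  "cox_loss n p X t d \<beta> =
     (\<Sum>i<n. d i * (ln (\<Sum>j\<in>risk_set n t i. exp (lin_pred p X j \<beta>)) - lin_pred p X i \<beta>))"

definition partial_deriv :: "nat \<Rightarrow> nat \<Rightarrow> ((nat \<Rightarrow> real) \<Rightarrow> real) \<Rightarrow> (nat \<Rightarrow> real) \<Rightarrow> real" where
  "partial_deriv m l f \<beta> = (deriv ^^ m) (\<lambda>s. f (\<beta>(l := s))) (\<beta> l)"

end

(*
  Along coordinate l the linear predictors are c j + a j * s with a j = X j l, so every summand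
  of the Cox loss is, up to a linear term, the log-partition function
  ln (\<Sum>j\<in>R\<^sub>i. exp (c j + a j * s)) of the Gibbs distribution on the risk set R\<^sub>i.
  Its second and third derivatives in s are the variance and the third central moment of a under
  that distribution. For any distribution of values in [m, M], Popoviciu's inequality bounds the
  variance by (M - m)\<^sup>2 / 4, and a linear majorant of the cubic (x - \<mu>)\<^sup>3 on [m, M] bounds
  the third central moment by (M - m)\<^sup>3 / (6 sqrt 3).
*)

theory Submission
  imports Defs
begin

definition weighted_mean :: "'a set \<Rightarrow> ('a \<Rightarrow> real) \<Rightarrow> ('a \<Rightarrow> real) \<Rightarrow> real" where
  "weighted_mean R p a = (\<Sum>j\<in>R. p j * a j)"

definition central_moment :: "nat \<Rightarrow> 'a set \<Rightarrow> ('a \<Rightarrow> real) \<Rightarrow> ('a \<Rightarrow> real) \<Rightarrow> real" where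
  "central_moment k R p a = weighted_mean R p (\<lambda>j. (a j - weighted_mean R p a) ^ k)"

lemma weighted_mean_add_const:
  assumes "sum p R = 1"
  shows "weighted_mean R p (\<lambda>j. a j + b) = weighted_mean R p a + b"
  using assms by (simp add: weighted_mean_def distrib_left sum.distrib flip: sum_distrib_right)

lemma weighted_mean_uminus: "weighted_mean R p (\<lambda>j. - a j) = - weighted_mean R p a"
  by (simp add: weighted_mean_def sum_negf)

lemma central_moment_add_const:
  assumes "sum p R = 1"
  shows "central_moment k R p (\<lambda>j. a j + b) = central_moment k R p a"
  using assms by (simp add: central_moment_def weighted_mean_add_const)

lemma central_moment_uminus:
  "central_moment k R p (\<lambda>j. - a j) = (-1) ^ k * central_moment k R p a"
proof -
  have "(- a j + weighted_mean R p a) ^ k = (-1) ^ k * (a j - weighted_mean R p a) ^ k" for j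
    by (simp flip: power_minus)
  then show ?thesis
    by (simp add: central_moment_def weighted_mean_uminus weighted_mean_def sum_distrib_left
        algebra_simps)
qed

lemma central_moment_1:
  assumes "sum p R = 1"
  shows "central_moment 1 R p a = 0"
  using weighted_mean_add_const[OF assms, of a "- weighted_mean R p a"]
  by (simp add: central_moment_def)

lemma weighted_mean_le_linear_majorant:
  assumes "\<And>j. j \<in> R \<Longrightarrow> 0 \<le> p j" and "sum p R = 1"
    and "\<And>j. j \<in> R \<Longrightarrow> f j \<le> K * a j + C"
  shows "weighted_mean R p f \<le> K * weighted_mean R p a + C"
proof -
  have "weighted_mean R p f \<le> weighted_mean R p (\<lambda>j. K * a j + C)"
    unfolding weighted_mean_def using assms by (intro sum_mono mult_left_mono) auto
  also have "\<dots> = K * weighted_mean R p a + C"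
    using assms(2) by (simp add: weighted_mean_def distrib_left sum.distrib sum_distrib_left
        flip: sum_distrib_right mult.assoc) (simp add: algebra_simps)
  finally show ?thesis .
qed

lemma central_moment_2_nonneg:
  assumes "\<And>j. j \<in> R \<Longrightarrow> 0 \<le> p j"
  shows "0 \<le> central_moment 2 R p a"
  unfolding central_moment_def weighted_mean_def using assms by (simp add: sum_nonneg)

text \<open>Popoviciu's inequality: the chord through \<open>(m, 0)\<close> and \<open>(M, 0)\<close> of the concave
  parabola \<open>(M - x) * (x - m)\<close> turns \<open>(x - \<mu>)\<^sup>2\<close> into a linear majorant on \<open>[m, M]\<close>.\<close>
lemma central_moment_2_le:
  assumes "\<And>j. j \<in> R \<Longrightarrow> 0 \<le> p j" and "sum p R = 1"
    and "\<And>j. j \<in> R \<Longrightarrow> a j \<in> {m..M}"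
  shows "central_moment 2 R p a \<le> (M - m)\<^sup>2 / 4"
proof -
  define \<mu> where "\<mu> = weighted_mean R p a"
  have majorant: "(a j - \<mu>)\<^sup>2 \<le> (M + m - 2 * \<mu>) * a j + (\<mu>\<^sup>2 - M * m)" if "j \<in> R" for j
  proof -
    have "0 \<le> (M - a j) * (a j - m)" using assms(3)[OF that] by simp
    then show ?thesis by (simp add: algebra_simps power2_eq_square)
  qed
  have "central_moment 2 R p a \<le> (M + m - 2 * \<mu>) * \<mu> + (\<mu>\<^sup>2 - M * m)"
    using weighted_mean_le_linear_majorant[OF assms(1,2) majorant]
    by (simp add: central_moment_def \<mu>_def)
  also have "\<dots> = (M - m)\<^sup>2 / 4 - ((M + m) / 2 - \<mu>)\<^sup>2"
    by (simp add: algebra_simps power2_eq_square field_simps)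
  also have "\<dots> \<le> (M - m)\<^sup>2 / 4" by simp
  finally show ?thesis .
qed

text \<open>The maximum of \<open>\<nu> (D\<^sup>2 - \<nu>\<^sup>2)\<close> is attained at \<open>\<nu> = D / sqrt 3\<close>; the difference
  to the maximum factors as \<open>(sqrt 3 \<nu> - D)\<^sup>2 (sqrt 3 \<nu> + 2 D) / (3 sqrt 3)\<close>.\<close>
lemma cubic_le_cube_div_sqrt3:
  fixes \<nu> D :: real
  assumes "0 \<le> \<nu>" and "0 \<le> D"
  shows "\<nu> * (D\<^sup>2 - \<nu>\<^sup>2) / 4 \<le> D ^ 3 / (6 * sqrt 3)"
proof -
  define r where "r = sqrt 3"
  have r: "r > 0" "r\<^sup>2 = 3" unfolding r_def by simp_all
  have "0 \<le> (r * \<nu> - D)\<^sup>2 * (r * \<nu> + 2 * D)" using assms r by simp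
  also have "\<dots> = r\<^sup>2 * r * \<nu> ^ 3 - 3 * r * \<nu> * D\<^sup>2 + 2 * D ^ 3"
    using r by (simp add: algebra_simps power2_eq_square power3_eq_cube)
  also have "\<dots> = 2 * D ^ 3 - 3 * r * (\<nu> * (D\<^sup>2 - \<nu>\<^sup>2))"
    using r by (simp add: algebra_simps power2_eq_square power3_eq_cube)
  finally have "3 * r * (\<nu> * (D\<^sup>2 - \<nu>\<^sup>2)) \<le> 2 * D ^ 3" by simp
  with r show ?thesis unfolding r_def by (simp add: field_simps mult_ac)
qed

text \<open>For a mean \<open>\<mu>\<close> in \<open>[0, D/3]\<close> the chord of \<open>(x - \<mu>)\<^sup>3\<close> over \<open>[0, D]\<close> is a linear
  majorant; otherwise the line touching the cubic at \<open>c = (3 \<mu> - D) / 2\<close> and meeting it at \<open>D\<close> is.\<close>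
lemma central_moment_3_le_of_nonneg:
  assumes "\<And>j. j \<in> R \<Longrightarrow> 0 \<le> p j" and "sum p R = 1"
    and "\<And>j. j \<in> R \<Longrightarrow> a j \<in> {0..D}"
  shows "central_moment 3 R p a \<le> D ^ 3 / (6 * sqrt 3)"
proof -
  define \<mu> where "\<mu> = weighted_mean R p a"
  have "0 \<le> \<mu>" unfolding \<mu>_def weighted_mean_def using assms by (auto intro!: sum_nonneg)
  have "\<mu> \<le> D"
    using weighted_mean_le_linear_majorant[OF assms(1,2), of a 0 a D] assms(3)
    by (simp add: \<mu>_def)
  consider "\<mu> \<le> D / 3" | "D / 3 < \<mu>" by linarith
  then show ?thesis
  proof cases
    case 1
    define K where "K = (D - 3 * \<mu>) * D + 3 * \<mu>\<^sup>2"
    define C where "C = - (\<mu> ^ 3)"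
    have majorant: "(a j - \<mu>) ^ 3 \<le> K * a j + C" if "j \<in> R" for j
    proof -
      have "0 \<le> (D - 3 * \<mu>) * a j * (D - a j) + (a j)\<^sup>2 * (D - a j)"
        using assms(3)[OF that] 1 by (intro add_nonneg_nonneg mult_nonneg_nonneg) auto
      then show ?thesis
        unfolding K_def C_def by (simp add: algebra_simps power2_eq_square power3_eq_cube)
    qed
    have "central_moment 3 R p a \<le> K * \<mu> + C"
      using weighted_mean_le_linear_majorant[OF assms(1,2) majorant]
      by (simp add: central_moment_def \<mu>_def)
    also have "\<dots> = (D - 2 * \<mu>) * (D\<^sup>2 - (D - 2 * \<mu>)\<^sup>2) / 4"
      unfolding K_def C_def by (simp add: algebra_simps power2_eq_square power3_eq_cube)
    also have "\<dots> \<le> D ^ 3 / (6 * sqrt 3)"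
      using 1 \<open>0 \<le> \<mu>\<close> by (intro cubic_le_cube_div_sqrt3) auto
    finally show ?thesis .
  next
    case 2
    define c where "c = (3 * \<mu> - D) / 2"
    have D: "D = 3 * \<mu> - 2 * c" unfolding c_def by (simp add: field_simps)
    define K where "K = 3 * \<mu>\<^sup>2 - 2 * c * D - c\<^sup>2"
    define C where "C = c\<^sup>2 * D - \<mu> ^ 3"
    have majorant: "(a j - \<mu>) ^ 3 \<le> K * a j + C" if "j \<in> R" for j
    proof -
      have "0 \<le> (D - a j) * (a j - c)\<^sup>2" using assms(3)[OF that] by simp
      then show ?thesis
        unfolding K_def C_def D by (simp add: algebra_simps power2_eq_square power3_eq_cube)
    qed
    have "central_moment 3 R p a \<le> K * \<mu> + C"
      using weighted_mean_le_linear_majorant[OF assms(1,2) majorant]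
      by (simp add: central_moment_def \<mu>_def)
    also have "\<dots> = (D - \<mu>) ^ 3 / 4"
      unfolding K_def C_def D by (simp add: algebra_simps power2_eq_square power3_eq_cube)
    also have "\<dots> \<le> (2 * D / 3) ^ 3 / 4"
      using 2 \<open>\<mu> \<le> D\<close> by (intro divide_right_mono power_mono) auto
    also have "\<dots> = (D / 3) * (D\<^sup>2 - (D / 3)\<^sup>2) / 4"
      by (simp add: power2_eq_square power3_eq_cube field_simps)
    also have "\<dots> \<le> D ^ 3 / (6 * sqrt 3)"
      using \<open>0 \<le> \<mu>\<close> \<open>\<mu> \<le> D\<close> by (intro cubic_le_cube_div_sqrt3) auto
    finally show ?thesis .
  qed
qed

lemma abs_central_moment_3_le:
  assumes "\<And>j. j \<in> R \<Longrightarrow> 0 \<le> p j" and "sum p R = 1"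
    and "\<And>j. j \<in> R \<Longrightarrow> a j \<in> {m..M}"
  shows "\<bar>central_moment 3 R p a\<bar> \<le> (M - m) ^ 3 / (6 * sqrt 3)"
proof -
  have "central_moment 3 R p a = central_moment 3 R p (\<lambda>j. a j + - m)"
    using central_moment_add_const[OF assms(2), of 3 a "- m"] by simp
  also have "\<dots> \<le> (M - m) ^ 3 / (6 * sqrt 3)"
    using assms by (intro central_moment_3_le_of_nonneg) auto
  finally have upper: "central_moment 3 R p a \<le> (M - m) ^ 3 / (6 * sqrt 3)" .
  have "- central_moment 3 R p a = central_moment 3 R p (\<lambda>j. - a j + M)"
    using central_moment_add_const[OF assms(2), of 3 "\<lambda>j. - a j" M]
      central_moment_uminus[of 3 R p a] by simp
  also have "\<dots> \<le> (M - m) ^ 3 / (6 * sqrt 3)"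
    using assms by (intro central_moment_3_le_of_nonneg) auto
  finally show ?thesis using upper by linarith
qed

lemma has_real_derivative_weighted_mean:
  assumes "\<And>j. j \<in> R \<Longrightarrow> ((\<lambda>s. p s j) has_real_derivative p' j) (at x)"
    and "\<And>j. j \<in> R \<Longrightarrow> ((\<lambda>s. f s j) has_real_derivative f' j) (at x)"
  shows "((\<lambda>s. weighted_mean R (p s) (f s)) has_real_derivative
           (\<Sum>j\<in>R. p' j * f x j + f' j * p x j)) (at x)"
  unfolding weighted_mean_def by (intro DERIV_sum DERIV_mult assms)

definition gibbs :: "'a set \<Rightarrow> ('a \<Rightarrow> real) \<Rightarrow> ('a \<Rightarrow> real) \<Rightarrow> real \<Rightarrow> 'a \<Rightarrow> real" where
  "gibbs R a c s j = exp (c j + a j * s) / (\<Sum>i\<in>R. exp (c i + a i * s))"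

lemma gibbs_nonneg: "0 \<le> gibbs R a c s j"
  unfolding gibbs_def by (simp add: sum_nonneg)

lemma weighted_mean_gibbs:
  "weighted_mean R (gibbs R a c s) f
     = (\<Sum>i\<in>R. exp (c i + a i * s) * f i) / (\<Sum>i\<in>R. exp (c i + a i * s))"
  by (simp add: weighted_mean_def gibbs_def sum_divide_distrib)

context
  fixes R :: "'a set" and a c :: "'a \<Rightarrow> real"
  assumes finite: "finite R" and nonempty: "R \<noteq> {}"
begin

lemma sum_exp_pos: "0 < (\<Sum>i\<in>R. exp (c i + a i * s))"
  using finite nonempty by (intro sum_pos) auto

lemma sum_gibbs: "sum (gibbs R a c s) R = 1"
  using sum_exp_pos[of s] unfolding gibbs_def by (simp flip: sum_divide_distrib)

lemma has_real_derivative_sum_exp: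
  "((\<lambda>s. \<Sum>i\<in>R. exp (c i + a i * s)) has_real_derivative
     (\<Sum>i\<in>R. exp (c i + a i * s)) * weighted_mean R (gibbs R a c s) a) (at s)"
  using sum_exp_pos[of s]
  by (auto intro!: derivative_eq_intros simp: weighted_mean_gibbs mult.commute)

lemma has_real_derivative_ln_sum_exp:
  "((\<lambda>s. ln (\<Sum>i\<in>R. exp (c i + a i * s))) has_real_derivative
     weighted_mean R (gibbs R a c s) a) (at s)"
  using sum_exp_pos[of s]
  by (auto intro!: derivative_eq_intros has_real_derivative_sum_exp simp: weighted_mean_gibbs)

lemma has_real_derivative_gibbs:
  "((\<lambda>s. gibbs R a c s j) has_real_derivative
     gibbs R a c s j * (a j - weighted_mean R (gibbs R a c s) a)) (at s)"
proof -
  define Z where "Z = (\<lambda>s. \<Sum>i\<in>R. exp (c i + a i * s))"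
  define \<mu> where "\<mu> = weighted_mean R (gibbs R a c s) a"
  have "Z s > 0" unfolding Z_def by (rule sum_exp_pos)
  have "((\<lambda>s. exp (c j + a j * s) / Z s) has_real_derivative
      (exp (c j + a j * s) * a j * Z s - exp (c j + a j * s) * (Z s * \<mu>)) / (Z s * Z s)) (at s)"
    using \<open>Z s > 0\<close> unfolding Z_def \<mu>_def
    by (intro DERIV_divide has_real_derivative_sum_exp) (auto intro!: derivative_eq_intros)
  also have "(exp (c j + a j * s) * a j * Z s - exp (c j + a j * s) * (Z s * \<mu>)) / (Z s * Z s)
      = gibbs R a c s j * (a j - \<mu>)"
    using \<open>Z s > 0\<close> by (simp add: gibbs_def Z_def field_simps)
  also have "(\<lambda>s. exp (c j + a j * s) / Z s) = (\<lambda>s. gibbs R a c s j)"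
    by (simp add: gibbs_def Z_def)
  finally show ?thesis unfolding \<mu>_def .
qed

text \<open>Along the exponential tilt the mean satisfies \<open>\<mu>' = m\<^sub>2\<close> and the central moments satisfy
  \<open>m\<^sub>k' = m\<^sub>k\<^sub>+\<^sub>1 - k m\<^sub>2 m\<^sub>k\<^sub>-\<^sub>1\<close>; as \<open>m\<^sub>1 = 0\<close>, the successive derivatives of the
  log-partition function are \<open>\<mu>\<close>, \<open>m\<^sub>2\<close> and \<open>m\<^sub>3\<close>.\<close>
lemma has_real_derivative_gibbs_mean:
  "((\<lambda>s. weighted_mean R (gibbs R a c s) a) has_real_derivative
     central_moment 2 R (gibbs R a c s) a) (at s)"
proof -
  define p where "p = gibbs R a c s"
  define \<mu> where "\<mu> = weighted_mean R p a"
  have "((\<lambda>s. weighted_mean R (gibbs R a c s) a) has_real_derivative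
      (\<Sum>j\<in>R. p j * (a j - \<mu>) * a j + 0 * p j)) (at s)"
    unfolding p_def \<mu>_def
    by (intro has_real_derivative_weighted_mean has_real_derivative_gibbs DERIV_const)
  moreover have "(\<Sum>j\<in>R. p j * (a j - \<mu>) * a j + 0 * p j)
      = (\<Sum>j\<in>R. p j * (a j - \<mu>) ^ 2 + \<mu> * (p j * (a j - \<mu>) ^ 1))"
    by (intro sum.cong) (simp_all add: algebra_simps power2_eq_square)
  moreover have "\<dots> = central_moment 2 R p a + \<mu> * central_moment 1 R p a"
    unfolding central_moment_def \<mu>_def[symmetric]
    by (simp add: weighted_mean_def sum.distrib sum_distrib_left del: power_one_right)
  moreover have "central_moment 1 R p a = 0"
    unfolding p_def by (intro central_moment_1 sum_gibbs)
  ultimately show ?thesis by (simp add: p_def)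
qed

lemma has_real_derivative_gibbs_central_moment:
  "((\<lambda>s. central_moment (Suc k) R (gibbs R a c s) a) has_real_derivative
     central_moment (Suc (Suc k)) R (gibbs R a c s) a
     - Suc k * central_moment 2 R (gibbs R a c s) a * central_moment k R (gibbs R a c s) a)
   (at s)"
proof -
  define p where "p = gibbs R a c s"
  define \<mu> where "\<mu> = weighted_mean R p a"
  have "((\<lambda>s. central_moment (Suc k) R (gibbs R a c s) a) has_real_derivative
      (\<Sum>j\<in>R. p j * (a j - \<mu>) * (a j - \<mu>) ^ Suc k
         + Suc k * ((0 - central_moment 2 R p a) * (a j - \<mu>) ^ (Suc k - Suc 0)) * p j)) (at s)"
    unfolding central_moment_def[of "Suc k"] p_def \<mu>_def
    by (intro has_real_derivative_weighted_mean has_real_derivative_gibbs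
        DERIV_power DERIV_diff DERIV_const has_real_derivative_gibbs_mean)
  moreover have "(\<Sum>j\<in>R. p j * (a j - \<mu>) * (a j - \<mu>) ^ Suc k
         + Suc k * ((0 - central_moment 2 R p a) * (a j - \<mu>) ^ (Suc k - Suc 0)) * p j)
      = (\<Sum>j\<in>R. p j * (a j - \<mu>) ^ Suc (Suc k)
         - Suc k * central_moment 2 R p a * (p j * (a j - \<mu>) ^ k))"
    by (intro sum.cong) (simp_all add: algebra_simps)
  moreover have "\<dots> = central_moment (Suc (Suc k)) R p a
      - Suc k * central_moment 2 R p a * central_moment k R p a"
    unfolding central_moment_def[of "Suc (Suc k)"] central_moment_def[of k] \<mu>_def[symmetric]
    by (simp add: weighted_mean_def sum_subtractf sum_distrib_left)
  ultimately show ?thesis by (simp add: p_def)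
qed

lemma has_real_derivative_gibbs_variance:
  "((\<lambda>s. central_moment 2 R (gibbs R a c s) a) has_real_derivative
     central_moment 3 R (gibbs R a c s) a) (at s)"
  using has_real_derivative_gibbs_central_moment[of 1 s] central_moment_1[OF sum_gibbs, of s a]
  by (simp add: numeral_2_eq_2 numeral_3_eq_3)

end

lemma gibbs_central_moment_bounds:
  fixes a :: "'a \<Rightarrow> real"
  assumes "finite R" and "R \<noteq> {}"
  defines "D \<equiv> Max (a ` R) - Min (a ` R)"
  shows "0 \<le> central_moment 2 R (gibbs R a c s) a"
    and "central_moment 2 R (gibbs R a c s) a \<le> D\<^sup>2 / 4"
    and "\<bar>central_moment 3 R (gibbs R a c s) a\<bar> \<le> \<bar>D\<bar> ^ 3 / (6 * sqrt 3)"
proof -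
  have range: "a j \<in> {Min (a ` R)..Max (a ` R)}" if "j \<in> R" for j
    using assms(1) that by simp
  have "0 \<le> D" unfolding D_def using range assms(2) by fastforce
  show "0 \<le> central_moment 2 R (gibbs R a c s) a"
    by (intro central_moment_2_nonneg gibbs_nonneg)
  show "central_moment 2 R (gibbs R a c s) a \<le> D\<^sup>2 / 4"
    unfolding D_def using gibbs_nonneg sum_gibbs[OF assms(1,2)] range
    by (rule central_moment_2_le)
  show "\<bar>central_moment 3 R (gibbs R a c s) a\<bar> \<le> \<bar>D\<bar> ^ 3 / (6 * sqrt 3)"
    unfolding abs_of_nonneg[OF \<open>0 \<le> D\<close>] unfolding D_def
    using gibbs_nonneg sum_gibbs[OF assms(1,2)] range
    by (rule abs_central_moment_3_le)
qed

lemma lin_pred_fun_upd: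
  assumes "l < p"
  shows "lin_pred p X j (\<beta>(l := s)) = lin_pred p X j (\<beta>(l := 0)) + X j l * s"
proof -
  have "lin_pred p X j (\<beta>(l := s)) = (\<Sum>k<p. X j k * (\<beta>(l := 0)) k + (if k = l then X j l * s else 0))"
    unfolding lin_pred_def by (rule sum.cong) auto
  also have "\<dots> = lin_pred p X j (\<beta>(l := 0)) + X j l * s"
    unfolding lin_pred_def using assms by (simp add: sum.distrib)
  finally show ?thesis .
qed

lemma partial_deriv_cox_loss:
  fixes X :: "nat \<Rightarrow> nat \<Rightarrow> real" and \<beta> :: "nat \<Rightarrow> real"
  assumes "l < p"
  defines "a \<equiv> \<lambda>j. X j l" and "c \<equiv> \<lambda>j. lin_pred p X j (\<beta>(l := 0))"
  shows "partial_deriv 2 l (cox_loss n p X t d) \<beta>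
           = (\<Sum>i<n. d i * central_moment 2 (risk_set n t i) (gibbs (risk_set n t i) a c (\<beta> l)) a)"
    and "partial_deriv 3 l (cox_loss n p X t d) \<beta>
           = (\<Sum>i<n. d i * central_moment 3 (risk_set n t i) (gibbs (risk_set n t i) a c (\<beta> l)) a)"
proof -
  define R where "R = risk_set n t"
  define m where "m k s = (\<Sum>i<n. d i * central_moment k (R i) (gibbs (R i) a c s) a)" for k s
  have finite: "finite (R i)" and nonempty: "i < n \<Longrightarrow> R i \<noteq> {}" for i
    unfolding R_def risk_set_def by auto
  have "lin_pred p X j (\<beta>(l := s)) = c j + a j * s" for j s
    unfolding a_def c_def by (rule lin_pred_fun_upd[OF assms(1)])
  then have restriction: "(\<lambda>s. cox_loss n p X t d (\<beta>(l := s)))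
      = (\<lambda>s. \<Sum>i<n. d i * (ln (\<Sum>j\<in>R i. exp (c j + a j * s)) - (c i + a i * s)))"
    unfolding cox_loss_def R_def by simp
  have first: "deriv \<dots> = (\<lambda>s. \<Sum>i<n. d i * (weighted_mean (R i) (gibbs (R i) a c s) a - a i))"
  proof (intro ext DERIV_imp_deriv DERIV_sum DERIV_cmult DERIV_diff)
    fix s i assume "i \<in> {..<n}"
    then show "((\<lambda>s. ln (\<Sum>j\<in>R i. exp (c j + a j * s))) has_real_derivative
        weighted_mean (R i) (gibbs (R i) a c s) a) (at s)"
      using finite nonempty by (intro has_real_derivative_ln_sum_exp) auto
    show "((\<lambda>s. c i + a i * s) has_real_derivative a i) (at s)"
      by (auto intro!: derivative_eq_intros)
  qed
  have second: "deriv \<dots> = m 2"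
    unfolding m_def
  proof (intro ext DERIV_imp_deriv DERIV_sum DERIV_cmult)
    fix s i assume "i \<in> {..<n}"
    then have "((\<lambda>s. weighted_mean (R i) (gibbs (R i) a c s) a - a i) has_real_derivative
        central_moment 2 (R i) (gibbs (R i) a c s) a - 0) (at s)"
      using finite nonempty by (intro DERIV_diff has_real_derivative_gibbs_mean DERIV_const) auto
    then show "((\<lambda>s. weighted_mean (R i) (gibbs (R i) a c s) a - a i) has_real_derivative
        central_moment 2 (R i) (gibbs (R i) a c s) a) (at s)"
      by simp
  qed
  have third: "deriv (m 2) = m 3"
    unfolding m_def
  proof (intro ext DERIV_imp_deriv DERIV_sum DERIV_cmult)
    fix s i assume "i \<in> {..<n}"
    then show "((\<lambda>s. central_moment 2 (R i) (gibbs (R i) a c s) a) has_real_derivative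
        central_moment 3 (R i) (gibbs (R i) a c s) a) (at s)"
      using finite nonempty by (intro has_real_derivative_gibbs_variance) auto
  qed
  have iterate: "(deriv ^^ 2) f = deriv (deriv f)" "(deriv ^^ 3) f = deriv (deriv (deriv f))"
    for f :: "real \<Rightarrow> real"
    by (simp_all add: numeral_2_eq_2 numeral_3_eq_3)
  have "(deriv ^^ 2) (\<lambda>s. cox_loss n p X t d (\<beta>(l := s))) = m 2"
    and "(deriv ^^ 3) (\<lambda>s. cox_loss n p X t d (\<beta>(l := s))) = m 3"
    unfolding iterate restriction first second third by simp_all
  then show "partial_deriv 2 l (cox_loss n p X t d) \<beta>
      = (\<Sum>i<n. d i * central_moment 2 (risk_set n t i) (gibbs (risk_set n t i) a c (\<beta> l)) a)"
    and "partial_deriv 3 l (cox_loss n p X t d) \<beta>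
      = (\<Sum>i<n. d i * central_moment 3 (risk_set n t i) (gibbs (risk_set n t i) a c (\<beta> l)) a)"
    unfolding partial_deriv_def by (simp_all add: m_def R_def)
qed

theorem theorem2:
  fixes n p :: nat and X :: "nat \<Rightarrow> nat \<Rightarrow> real" and t d :: "nat \<Rightarrow> real"
    and \<beta> :: "nat \<Rightarrow> real" and l :: nat
  assumes d01: "\<And>i. i < n \<Longrightarrow> d i \<in> {0, 1}"
    and l: "l < p"
  shows "0 \<le> partial_deriv 2 l (cox_loss n p X t d) \<beta>
       \<and> partial_deriv 2 l (cox_loss n p X t d) \<beta>
           \<le> 1/4 * (\<Sum>i<n. d i * (Max ((\<lambda>k. X k l) ` risk_set n t i)
                                    - Min ((\<lambda>k. X k l) ` risk_set n t i))^2)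
       \<and> \<bar>partial_deriv 3 l (cox_loss n p X t d) \<beta>\<bar>
           \<le> 1 / (6 * sqrt 3) * (\<Sum>i<n. d i * \<bar>Max ((\<lambda>k. X k l) ` risk_set n t i)
                                    - Min ((\<lambda>k. X k l) ` risk_set n t i)\<bar>^3)"
proof -
  define a where "a = (\<lambda>k. X k l)"
  define R where "R = risk_set n t"
  define P where "P i = gibbs (R i) a (\<lambda>j. lin_pred p X j (\<beta>(l := 0))) (\<beta> l)" for i
  define D where "D i = Max (a ` R i) - Min (a ` R i)" for i
  have "finite (R i)" and "i < n \<Longrightarrow> R i \<noteq> {}" for i
    unfolding R_def risk_set_def by auto
  then have "0 \<le> d i * central_moment 2 (R i) (P i) a"
    and "d i * central_moment 2 (R i) (P i) a \<le> 1/4 * (d i * (D i)\<^sup>2)"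
    and "\<bar>d i * central_moment 3 (R i) (P i) a\<bar> \<le> 1 / (6 * sqrt 3) * (d i * \<bar>D i\<bar> ^ 3)"
    if "i < n" for i
    using gibbs_central_moment_bounds[of "R i" a] d01[OF that] that unfolding P_def D_def
    by (auto simp: abs_mult)
  moreover have "partial_deriv 2 l (cox_loss n p X t d) \<beta> = (\<Sum>i<n. d i * central_moment 2 (R i) (P i) a)"
    and "partial_deriv 3 l (cox_loss n p X t d) \<beta> = (\<Sum>i<n. d i * central_moment 3 (R i) (P i) a)"
    using partial_deriv_cox_loss[OF l] unfolding P_def R_def a_def by simp_all
  ultimately show ?thesis
    unfolding D_def a_def R_def[symmetric] sum_distrib_left
    by (auto intro!: sum_nonneg sum_mono order.trans[OF sum_abs])
qed

end
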